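(* Let $P=\sum_Ia_Ix^I\in\mathbb{R}[x_1,\dots,x_k]$, where $I=(i_1,\dots,i_k)$ ranges over $(\mathbb{N}\cup\{0\})^k$ and $x^I=x_1^{i_1}\cdots x_k^{i_k}$. Suppose $P$ is positive dominant, i.e. $A_I:=\sum_{I'\le I}a_{I'}>0$ for every multi-index $I$, where $I'\le I$ means $i'_j\le i_j$ for all $j$. Then $P>0$ on $[0,1]^k$. *)

theory Defs
  imports Complex_Main
begin

text \<open>A real polynomial in the variables indexed by the finite type 'k is represented
by its coefficient function on multi-indices I :: 'k \<Rightarrow> nat, with finite support.\<close>

definition mpoly_eval :: "(('k::finite \<Rightarrow> nat) \<Rightarrow> real) \<Rightarrow> ('k \<Rightarrow> real) \<Rightarrow> real" where
  "mpoly_eval a x = (\<Sum>I\<in>{I. a I \<noteq> 0}. a I * (\<Prod>j\<in>UNIV. x j ^ I j))"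

definition positive_dominant :: "(('k::finite \<Rightarrow> nat) \<Rightarrow> real) \<Rightarrow> bool" where
  "positive_dominant a \<longleftrightarrow> (\<forall>I. (\<Sum>I'\<in>{I'. I' \<le> I}. a I') > 0)"

end

theory Submission
  imports Defs "HOL-Library.FuncSet"
begin

(* Fix N bounding every exponent occurring in P.  For t in [0,1] the numbers
   w_n(t) = t^n - t^(n+1) (n < N) and w_N(t) = t^N are nonnegative and telescope to
   t^i = sum_{i <= n <= N} w_n(t).  Multiplying over the coordinates gives
   x^I = sum_{I <= J <= N} w_J(x) with w_J(x) = prod_j w_{J_j}(x_j) >= 0, and the case
   I = 0 shows that these weights sum to 1.  Exchanging the order of summation
   (Abel summation) yields P(x) = sum_{J <= N} w_J(x) A_J, a convex combination of
   the positive numbers A_J. *)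

definition step_weight :: "real \<Rightarrow> nat \<Rightarrow> nat \<Rightarrow> real" where
  "step_weight t N n = (if n = N then t ^ N else t ^ n - t ^ Suc n)"

lemma step_weight_nonneg: "0 \<le> t \<Longrightarrow> t \<le> 1 \<Longrightarrow> 0 \<le> step_weight t N n"
  unfolding step_weight_def by (auto simp: mult_left_le_one_le)

lemma power_eq_sum_step_weight:
  assumes "i \<le> N"
  shows "t ^ i = (\<Sum>n\<in>{i..N}. step_weight t N n)"
proof -
  have "{i..N} = insert N {i..<N}" using assms by auto
  then have "(\<Sum>n\<in>{i..N}. step_weight t N n) = t ^ N + (\<Sum>n\<in>{i..<N}. step_weight t N n)"
    by (simp add: step_weight_def)
  also have "(\<Sum>n\<in>{i..<N}. step_weight t N n) = (\<Sum>n\<in>{i..<N}. (- (t ^ Suc n)) - (- (t ^ n)))"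
    by (intro sum.cong) (auto simp: step_weight_def)
  also have "\<dots> = t ^ i - t ^ N"
    using sum_Suc_diff'[OF assms, of "\<lambda>n. - (t ^ n)"] by simp
  finally show ?thesis by simp
qed

definition index_box :: "nat \<Rightarrow> ('k \<Rightarrow> nat) set" where
  "index_box N = {J. \<forall>j. J j \<le> N}"

lemma index_box_eq_PiE: "index_box N = PiE UNIV (\<lambda>_. {..N})"
  by (auto simp: index_box_def PiE_def Pi_def extensional_def)

lemma finite_index_box: "finite (index_box N :: ('k::finite \<Rightarrow> nat) set)"
  by (simp add: index_box_eq_PiE finite_PiE)

lemma index_box_downward_closed: "J \<in> index_box N \<Longrightarrow> I \<le> J \<Longrightarrow> I \<in> index_box N"
  by (auto simp: index_box_def le_fun_def intro: le_trans)

lemma finite_subset_index_box: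
  assumes "finite (S :: ('k::finite \<Rightarrow> nat) set)"
  obtains N where "S \<subseteq> index_box N"
proof -
  have "finite ((\<lambda>(I, j). I j) ` (S \<times> UNIV))" using assms by simp
  then obtain N where "\<forall>n \<in> (\<lambda>(I, j). I j) ` (S \<times> UNIV). n \<le> N"
    using finite_nat_set_iff_bounded_le by blast
  then have "S \<subseteq> index_box N" by (auto simp: index_box_def)
  then show ?thesis by (rule that)
qed

definition box_weight :: "nat \<Rightarrow> ('k::finite \<Rightarrow> real) \<Rightarrow> ('k \<Rightarrow> nat) \<Rightarrow> real" where
  "box_weight N x J = (\<Prod>j\<in>UNIV. step_weight (x j) N (J j))"

lemma box_weight_nonneg:
  "(\<And>j. 0 \<le> x j \<and> x j \<le> 1) \<Longrightarrow> 0 \<le> box_weight N x J"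
  unfolding box_weight_def by (simp add: prod_nonneg step_weight_nonneg)

lemma monomial_eq_sum_box_weight:
  fixes x :: "'k::finite \<Rightarrow> real"
  assumes "I \<in> index_box N"
  shows "(\<Prod>j\<in>UNIV. x j ^ I j) = (\<Sum>J\<in>{J \<in> index_box N. I \<le> J}. box_weight N x J)"
proof -
  have "(\<Prod>j\<in>UNIV. x j ^ I j) = (\<Prod>j\<in>UNIV. \<Sum>n\<in>{I j..N}. step_weight (x j) N n)"
    using assms by (auto simp: index_box_def power_eq_sum_step_weight intro!: prod.cong)
  also have "\<dots> = (\<Sum>J\<in>PiE UNIV (\<lambda>j. {I j..N}). box_weight N x J)"
    unfolding box_weight_def by (rule prod_sum_PiE) auto
  also have "PiE UNIV (\<lambda>j. {I j..N}) = {J \<in> index_box N. I \<le> J}"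
    by (auto simp: PiE_def Pi_def extensional_def index_box_def le_fun_def)
  finally show ?thesis .
qed

lemma sum_box_weight: "(\<Sum>J\<in>index_box N. box_weight N x J) = 1"
  using monomial_eq_sum_box_weight[of "\<lambda>_. 0" N x] by (simp add: index_box_def le_fun_def)

lemma mpoly_eval_eq_sum_box_weight:
  fixes a :: "('k::finite \<Rightarrow> nat) \<Rightarrow> real"
  assumes "{I. a I \<noteq> 0} \<subseteq> index_box N"
  shows "mpoly_eval a x = (\<Sum>J\<in>index_box N. box_weight N x J * (\<Sum>I\<in>{I. I \<le> J}. a I))"
proof -
  let ?B = "index_box N :: ('k \<Rightarrow> nat) set"
  have "mpoly_eval a x = (\<Sum>I\<in>?B. a I * (\<Prod>j\<in>UNIV. x j ^ I j))"
    unfolding mpoly_eval_def using assms finite_index_box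
    by (intro sum.mono_neutral_left) auto
  also have "\<dots> = (\<Sum>I\<in>?B. \<Sum>J\<in>?B. if I \<le> J then a I * box_weight N x J else 0)"
    by (auto simp: monomial_eq_sum_box_weight sum_distrib_left
        sum.inter_filter[OF finite_index_box] intro!: sum.cong)
  also have "\<dots> = (\<Sum>J\<in>?B. \<Sum>I\<in>?B. if I \<le> J then a I * box_weight N x J else 0)"
    by (rule sum.swap)
  also have "\<dots> = (\<Sum>J\<in>?B. box_weight N x J * (\<Sum>I\<in>{I. I \<le> J}. a I))"
  proof (intro sum.cong refl)
    fix J assume "J \<in> ?B"
    then have "{I \<in> ?B. I \<le> J} = {I. I \<le> J}" by (auto intro: index_box_downward_closed)
    then show "(\<Sum>I\<in>?B. if I \<le> J then a I * box_weight N x J else 0)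
        = box_weight N x J * (\<Sum>I\<in>{I. I \<le> J}. a I)"
      by (simp add: sum.inter_filter[OF finite_index_box, symmetric] sum_distrib_left mult.commute)
  qed
  finally show ?thesis .
qed

lemma convex_combination_pos:
  fixes w f :: "'a \<Rightarrow> real"
  assumes "finite S" "\<And>J. J \<in> S \<Longrightarrow> 0 \<le> w J" "sum w S = 1" "\<And>J. J \<in> S \<Longrightarrow> 0 < f J"
  shows "0 < (\<Sum>J\<in>S. w J * f J)"
proof -
  obtain J where "J \<in> S" "w J \<noteq> 0"
    using \<open>sum w S = 1\<close> by (metis sum.neutral zero_neq_one)
  with assms show ?thesis
    by (intro sum_pos2[of S J]) (auto simp: order_less_le)
qed

theorem lemma7p2:
  fixes a :: "('k::finite \<Rightarrow> nat) \<Rightarrow> real" and x :: "'k \<Rightarrow> real"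
  assumes "finite {I. a I \<noteq> 0}"
    and "positive_dominant a"
    and "\<And>j. 0 \<le> x j \<and> x j \<le> 1"
  shows "mpoly_eval a x > 0"
proof -
  obtain N where N: "{I. a I \<noteq> 0} \<subseteq> index_box N"
    using finite_subset_index_box[OF assms(1)] .
  have "0 < (\<Sum>J\<in>index_box N. box_weight N x J * (\<Sum>I\<in>{I. I \<le> J}. a I))"
    using assms(2,3)
    by (intro convex_combination_pos finite_index_box sum_box_weight box_weight_nonneg)
       (auto simp: positive_dominant_def)
  then show ?thesis by (simp add: mpoly_eval_eq_sum_box_weight[OF N])
qed

end
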